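(* Assume $\epsilon(s,a)\ge0$ for all $(s,a)$, and let $\hat J^*\in\mathbb{R}^N$ be a fixed point of the $\ell_1$ extended value iteration operator $\hat U$ with $\hat J^*\ge0$. Then the operator $\hat U^{\dagger,0}$ has a fixed point in the set $$X=\{x\in\mathbb{R}^N:\ \min_{a\in\mathcal A(s)}c(s,a)\le x_s\le \hat J^*_s\ \ \forall s=1,\dots,N\}.$$
   Context: SSP data: states $\mathcal S=\{1,\dots,N\}$, finite action sets $\mathcal A(s)$, costs $c(s,a)\in[0,1]$, an estimated substochastic transition function $\hat P(s'|s,a)\ge0$ with $\sum_{s'\in\mathcal S}\hat P(s'|s,a)\le1$, and radii $\epsilon(s,a)\ge0$. The $\ell_1$ extended value iteration operator is $(\hat Ux)_s=\min_{a\in\mathcal A(s)}\{c(s,a)+\min_{\tilde p}\sum_{s'}\tilde p_{s'}x_{s'}\}$, the inner minimum over $\tilde p\in\mathbb{R}^N$ with $\tilde p\ge0$, $\sum_{s'}\tilde p_{s'}\le1$, $\lVert\tilde p-\hat P(\cdot|s,a)\rVert_1\le\epsilon(s,a)$. The operator $\hat U^{\dagger,0}:\mathbb{R}^N\to\mathbb{R}^N$ is $$(\hat U^{\dagger,0}x)_s=\min_{a\in\mathcal A(s)}\Big\{c(s,a)+\max\Big\{\sum_{s'\in\mathcal S}\hat P(s'|s,a)x_{s'}-\epsilon(s,a)\max_{s''}x_{s''},\ 0\Big\}\Big\}.$$ *)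

theory Defs
  imports "HOL-Analysis.Analysis"
begin

text \<open>States are the elements of a finite type 's (playing the role of {1,...,N});
  vectors in R^N are functions 's \<Rightarrow> real. Phat s a s' is the estimated substochastic transition probability,
  eps s a the l1 radius.\<close>

definition l1_ball_set ::
  "('s::finite \<Rightarrow> 'a \<Rightarrow> 's \<Rightarrow> real) \<Rightarrow> ('s \<Rightarrow> 'a \<Rightarrow> real) \<Rightarrow> 's \<Rightarrow> 'a \<Rightarrow> ('s \<Rightarrow> real) set" where
  "l1_ball_set Phat eps s a =
     {p. (\<forall>s'. 0 \<le> p s') \<and> (\<Sum>s'\<in>UNIV. p s') \<le> 1 \<and>
         (\<Sum>s'\<in>UNIV. \<bar>p s' - Phat s a s'\<bar>) \<le> eps s a}"

text \<open>The l1 extended value iteration operator (the inner minimum is attained; we write it as Inf).\<close>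
definition EVI_op ::
  "('s::finite \<Rightarrow> 'a set) \<Rightarrow> ('s \<Rightarrow> 'a \<Rightarrow> real) \<Rightarrow> ('s \<Rightarrow> 'a \<Rightarrow> 's \<Rightarrow> real) \<Rightarrow> ('s \<Rightarrow> 'a \<Rightarrow> real)
    \<Rightarrow> ('s \<Rightarrow> real) \<Rightarrow> ('s \<Rightarrow> real)" where
  "EVI_op A c Phat eps x = (\<lambda>s. Min ((\<lambda>a. c s a +
       Inf ((\<lambda>p. \<Sum>s'\<in>UNIV. p s' * x s') ` l1_ball_set Phat eps s a)) ` A s))"

definition Udag0_op ::
  "('s::finite \<Rightarrow> 'a set) \<Rightarrow> ('s \<Rightarrow> 'a \<Rightarrow> real) \<Rightarrow> ('s \<Rightarrow> 'a \<Rightarrow> 's \<Rightarrow> real) \<Rightarrow> ('s \<Rightarrow> 'a \<Rightarrow> real)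
    \<Rightarrow> ('s \<Rightarrow> real) \<Rightarrow> ('s \<Rightarrow> real)" where
  "Udag0_op A c Phat eps x = (\<lambda>s. Min ((\<lambda>a. c s a +
       max ((\<Sum>s'\<in>UNIV. Phat s a s' * x s') - eps s a * Max (range x)) 0) ` A s))"

end

theory Submission
  imports Defs
begin

text \<open>For every p in the l1 ball around Phat(s,a), the sum of p x falls short of the sum of
  Phat(s,a) x by at most eps(s,a) times the largest entry of x (for x \<ge> 0). Hence on nonnegative
  vectors below J the operator U-dagger-0 stays below the extended value iteration operator at J,
  that is below J itself, and it never drops below the minimal costs. So it maps the box between the
  minimal costs and J into itself, and being continuous it has a fixed point there by Brouwer's
  theorem.\<close>

lemma continuous_on_Min_image:
  fixes f :: "'b \<Rightarrow> 'x::topological_space \<Rightarrow> 'c::linorder_topology"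
  assumes "finite F" "F \<noteq> {}" "\<And>a. a \<in> F \<Longrightarrow> continuous_on S (f a)"
  shows "continuous_on S (\<lambda>x. Min ((\<lambda>a. f a x) ` F))"
  using assms
proof (induction F rule: finite_ne_induct)
  case (insert a F)
  then have "continuous_on S (\<lambda>x. min (f a x) (Min ((\<lambda>a. f a x) ` F)))"
    by (intro continuous_on_min) auto
  with insert show ?case by (simp add: Min_insert)
qed simp

lemma continuous_on_Max_image:
  fixes f :: "'b \<Rightarrow> 'x::topological_space \<Rightarrow> 'c::linorder_topology"
  assumes "finite F" "F \<noteq> {}" "\<And>a. a \<in> F \<Longrightarrow> continuous_on S (f a)"
  shows "continuous_on S (\<lambda>x. Max ((\<lambda>a. f a x) ` F))"
  using assms
proof (induction F rule: finite_ne_induct)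
  case (insert a F)
  then have "continuous_on S (\<lambda>x. max (f a x) (Max ((\<lambda>a. f a x) ` F)))"
    by (intro continuous_on_max) auto
  with insert show ?case by (simp add: Max_insert)
qed simp

lemma brouwer_box:
  fixes l u :: "'s::finite \<Rightarrow> real" and T :: "('s \<Rightarrow> real) \<Rightarrow> 's \<Rightarrow> real"
  defines "B \<equiv> {x. \<forall>s. l s \<le> x s \<and> x s \<le> u s}"
  assumes "\<And>s. l s \<le> u s" and "continuous_on B T" and "\<And>x. x \<in> B \<Longrightarrow> T x \<in> B"
  shows "\<exists>x\<in>B. T x = x"
proof -
  define g :: "real^'s \<Rightarrow> real^'s" where "g v = (\<chi> s. T (vec_nth v) s)" for v
  define C :: "(real^'s) set" where "C = cbox (\<chi> s. l s) (\<chi> s. u s)"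
  have mem_C: "v \<in> C \<longleftrightarrow> vec_nth v \<in> B" for v
    by (simp add: C_def B_def mem_box_cart(2))
  have "continuous_on C vec_nth"
    by (intro continuous_on_coordinatewise_then_product continuous_on_component continuous_on_id)
  moreover have "continuous_on (vec_nth ` C) T"
    using assms(3) by (rule continuous_on_subset) (auto simp: mem_C)
  ultimately have "continuous_on C (T \<circ> vec_nth)"
    by (rule continuous_on_compose)
  then have "continuous_on C g"
    unfolding g_def by (auto intro!: continuous_on_vec_lambda
        dest: continuous_on_product_then_coordinatewise simp: o_def)
  moreover have "vec_nth (g v) = T (vec_nth v)" for v
    by (simp add: g_def fun_eq_iff)
  then have "g \<in> C \<rightarrow> C"
    using assms(4) by (simp add: mem_C)
  moreover have "(\<chi> s. l s) \<in> C"
    using assms(2) by (simp add: mem_C B_def)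
  then have "C \<noteq> {}" by blast
  moreover have "compact C" "convex C" by (simp_all add: C_def)
  ultimately obtain v where "v \<in> C" "g v = v"
    using brouwer[of C g] by blast
  then show ?thesis
    by (intro bexI[of _ "vec_nth v"]) (auto simp: mem_C g_def vec_eq_iff)
qed

lemma sum_mult_l1_perturbation_ge:
  fixes p P x :: "'s::finite \<Rightarrow> real"
  assumes "\<And>s. 0 \<le> x s" and "(\<Sum>s\<in>UNIV. \<bar>p s - P s\<bar>) \<le> e"
  shows "(\<Sum>s\<in>UNIV. P s * x s) - e * Max (range x) \<le> (\<Sum>s\<in>UNIV. p s * x s)"
proof -
  let ?M = "Max (range x)"
  have x_le_M: "x s \<le> ?M" for s by simp
  have M_nonneg: "0 \<le> ?M"
    using assms(1) x_le_M order.trans by blast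
  have "(\<Sum>s\<in>UNIV. P s * x s) - (\<Sum>s\<in>UNIV. p s * x s) = (\<Sum>s\<in>UNIV. (P s - p s) * x s)"
    by (simp add: sum_subtractf[symmetric] algebra_simps)
  also have "\<dots> \<le> (\<Sum>s\<in>UNIV. \<bar>p s - P s\<bar> * ?M)"
  proof (rule sum_mono)
    fix s
    have "(P s - p s) * x s \<le> \<bar>p s - P s\<bar> * x s"
      using assms(1)[of s] by (intro mult_right_mono) auto
    also have "\<dots> \<le> \<bar>p s - P s\<bar> * ?M"
      by (intro mult_left_mono x_le_M) auto
    finally show "(P s - p s) * x s \<le> \<bar>p s - P s\<bar> * ?M" .
  qed
  also have "\<dots> = (\<Sum>s\<in>UNIV. \<bar>p s - P s\<bar>) * ?M"
    by (simp add: sum_distrib_right)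
  also have "\<dots> \<le> e * ?M"
    using assms(2) M_nonneg by (rule mult_right_mono)
  finally show ?thesis by linarith
qed

lemma continuous_on_Udag0_op:
  fixes A :: "'s::finite \<Rightarrow> 'a set"
  assumes "\<And>s. finite (A s)" and "\<And>s. A s \<noteq> {}"
  shows "continuous_on UNIV (Udag0_op A c Phat eps)"
proof -
  have "continuous_on UNIV (\<lambda>x::'s \<Rightarrow> real. Max ((\<lambda>s. x s) ` UNIV))"
    by (intro continuous_on_Max_image) auto
  then show ?thesis
    unfolding Udag0_op_def using assms
    by (intro continuous_on_coordinatewise_then_product continuous_on_Min_image)
       (auto intro!: continuous_intros)
qed

lemma Min_cost_le_Udag0_op:
  assumes "finite (A s)" and "A s \<noteq> {}"
  shows "Min (c s ` A s) \<le> Udag0_op A c Phat eps x s"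
proof -
  have "Min (c s ` A s) \<le> c s a + max t 0" if "a \<in> A s" for a t
    using assms that by (intro add_increasing2) auto
  then show ?thesis
    unfolding Udag0_op_def using assms by (simp add: Min_ge_iff)
qed

lemma Udag0_op_le_EVI_op:
  assumes A_fin: "finite (A s)" and A_ne: "A s \<noteq> {}"
    and P_nonneg: "\<And>a s'. a \<in> A s \<Longrightarrow> 0 \<le> Phat s a s'"
    and P_sub: "\<And>a. a \<in> A s \<Longrightarrow> (\<Sum>s'\<in>UNIV. Phat s a s') \<le> 1"
    and eps_nonneg: "\<And>a. a \<in> A s \<Longrightarrow> 0 \<le> eps s a"
    and x_nonneg: "\<And>s'. 0 \<le> x s'" and x_le_y: "\<And>s'. x s' \<le> y s'"
  shows "Udag0_op A c Phat eps x s \<le> EVI_op A c Phat eps y s"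
proof -
  have "Udag0_op A c Phat eps x s
      \<le> c s a + Inf ((\<lambda>p. \<Sum>s'\<in>UNIV. p s' * y s') ` l1_ball_set Phat eps s a)"
    if a: "a \<in> A s" for a
  proof -
    let ?d = "max ((\<Sum>s'\<in>UNIV. Phat s a s' * x s') - eps s a * Max (range x)) 0"
    have "Phat s a \<in> l1_ball_set Phat eps s a"
      using a P_nonneg P_sub eps_nonneg by (simp add: l1_ball_set_def)
    moreover have "?d \<le> (\<Sum>s'\<in>UNIV. p s' * y s')" if p: "p \<in> l1_ball_set Phat eps s a" for p
    proof -
      have p_nonneg: "0 \<le> p s'" for s'
        using p by (simp add: l1_ball_set_def)
      have "(\<Sum>s'\<in>UNIV. Phat s a s' * x s') - eps s a * Max (range x) \<le> (\<Sum>s'\<in>UNIV. p s' * x s')"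
        using p x_nonneg by (intro sum_mult_l1_perturbation_ge) (simp_all add: l1_ball_set_def)
      also have "\<dots> \<le> (\<Sum>s'\<in>UNIV. p s' * y s')"
        using p_nonneg x_le_y by (intro sum_mono mult_left_mono) auto
      moreover have "0 \<le> (\<Sum>s'\<in>UNIV. p s' * y s')"
        using p_nonneg x_nonneg x_le_y by (meson order.trans mult_nonneg_nonneg sum_nonneg)
      ultimately show ?thesis by simp
    qed
    ultimately have "?d \<le> Inf ((\<lambda>p. \<Sum>s'\<in>UNIV. p s' * y s') ` l1_ball_set Phat eps s a)"
      by (intro cInf_greatest) auto
    moreover have "Udag0_op A c Phat eps x s \<le> c s a + ?d"
      unfolding Udag0_op_def using A_fin a by simp
    ultimately show ?thesis by linarith
  qed
  then show ?thesis
    unfolding EVI_op_def using A_fin A_ne by (simp add: Min_ge_iff)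
qed

theorem mainTheorem4:
  fixes A :: "'s::finite \<Rightarrow> 'a set"
    and c :: "'s \<Rightarrow> 'a \<Rightarrow> real"
    and Phat :: "'s \<Rightarrow> 'a \<Rightarrow> 's \<Rightarrow> real"
    and eps :: "'s \<Rightarrow> 'a \<Rightarrow> real"
    and J :: "'s \<Rightarrow> real"
  assumes A_fin: "\<And>s. finite (A s)"
    and A_ne: "\<And>s. A s \<noteq> {}"
    and c_range: "\<And>s a. a \<in> A s \<Longrightarrow> 0 \<le> c s a \<and> c s a \<le> 1"
    and P_nonneg: "\<And>s a s'. a \<in> A s \<Longrightarrow> 0 \<le> Phat s a s'"
    and P_sub: "\<And>s a. a \<in> A s \<Longrightarrow> (\<Sum>s'\<in>UNIV. Phat s a s') \<le> 1"
    and eps_nonneg: "\<And>s a. a \<in> A s \<Longrightarrow> 0 \<le> eps s a"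
    and J_fix: "EVI_op A c Phat eps J = J"
    and J_nonneg: "\<And>s. 0 \<le> J s"
  shows "\<exists>x. (\<forall>s. Min (c s ` A s) \<le> x s \<and> x s \<le> J s) \<and> Udag0_op A c Phat eps x = x"
proof -
  let ?T = "Udag0_op A c Phat eps" and ?l = "\<lambda>s. Min (c s ` A s)"
  have T_le_J: "?T x s \<le> J s" if "\<And>s'. 0 \<le> x s'" "\<And>s'. x s' \<le> J s'" for x s
  proof -
    have "?T x s \<le> EVI_op A c Phat eps J s"
      using that by (intro Udag0_op_le_EVI_op A_fin A_ne P_nonneg P_sub eps_nonneg)
    with J_fix show ?thesis by simp
  qed
  have l_nonneg: "0 \<le> ?l s" for s
    using A_fin A_ne c_range by (simp add: Min_ge_iff)
  have "?l s \<le> J s" for s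
  proof -
    have "?l s \<le> ?T J s"
      using A_fin A_ne by (rule Min_cost_le_Udag0_op)
    also have "\<dots> \<le> J s"
      by (intro T_le_J J_nonneg order.refl)
    finally show ?thesis .
  qed
  moreover have "continuous_on {x. \<forall>s. ?l s \<le> x s \<and> x s \<le> J s} ?T"
    using continuous_on_Udag0_op[OF A_fin A_ne] by (rule continuous_on_subset) simp
  moreover have "?T x \<in> {x. \<forall>s. ?l s \<le> x s \<and> x s \<le> J s}"
    if "x \<in> {x. \<forall>s. ?l s \<le> x s \<and> x s \<le> J s}" for x
  proof -
    have "0 \<le> x s" "x s \<le> J s" for s
      using that l_nonneg[of s] by (auto intro: order.trans)
    then show ?thesis
      by (simp add: A_fin A_ne Min_cost_le_Udag0_op T_le_J)
  qed
  ultimately show ?thesis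
    using brouwer_box[of ?l J ?T] by auto
qed

end
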